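(* Work in the Poincaré ball model of $\mathbb{H}^3$. For $a>1$ let $P_{3,4}(a)$ be the intersection of the open unit ball with the sets $H(ap)$ for all $p\in\{(\pm1,\pm1,\pm1)/\sqrt3\}$. Then: (1) For $a>\sqrt3$, the four spheres $S(a(\pm1,\pm1,1)/\sqrt3)$ have a common point $p$ with $|p|<1$, and $P_{3,4}(a)$ is a finite octahedron. For $a=\sqrt3$ the octahedron is ideal with dihedral angle $\pi/2$. As $a\to\infty$, the dihedral angle increases to $\arccos(-1/3)$, the dihedral angle of the Euclidean octahedron. (2) For $a=\sqrt{3/2}$, $S(a(1,1,1)/\sqrt3)$ and $S(a(1,-1,1)/\sqrt3)$ touch. (3) For $a<\sqrt{3/2}$, $S(a(1,1,1)/\sqrt3)$ and $S(a(1,-1,1)/\sqrt3)$ are disjoint. (4) For $a>\sqrt{3/2}$, $S(a(1,1,1)/\sqrt3)$ and $S(a(1,-1,1)/\sqrt3)$ meet at a dihedral angle $\alpha$ with $\cos\alpha=\frac{3-a^2}{3(a^2-1)}$. (5) For $\sqrt3>a>\sqrt{3/2}$, $P_{3,4}(a)$ is hyperideal.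
   Context: For $x\in\mathbb{R}^3$ with $|x|>1$, $S(x)$ is the sphere centered at $x$ with radius $\sqrt{|x|^2-1}$ (it meets the unit sphere orthogonally and represents a hyperbolic plane), and $H(x)$ is the unbounded component of $\mathbb{R}^3\setminus S(x)$. The octahedron is finite if the four face-spheres around a vertex meet inside the open unit ball, ideal if they meet on the unit sphere, and hyperideal if adjacent face-spheres intersect but the four spheres around a vertex have no common point in the closed unit ball. *)

theory Defs
  imports "HOL-Analysis.Analysis"
begin

text \<open>Sphere S(x) orthogonal to the unit sphere, and H(x) the unbounded
  component of its complement.\<close>

definition S :: "real^3 \<Rightarrow> (real^3) set" where
  "S x = sphere x (sqrt ((norm x)^2 - 1))"

definition H :: "real^3 \<Rightarrow> (real^3) set" where
  "H x = outside (S x)"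

definition sign_vecs :: "(real^3) set" where
  "sign_vecs = {v. \<forall>i. v $ i = 1 \<or> v $ i = -1}"

definition ctr :: "real \<Rightarrow> real^3 \<Rightarrow> real^3" where
  "ctr a v = (a / sqrt 3) *\<^sub>R v"

definition P34 :: "real \<Rightarrow> (real^3) set" where
  "P34 a = ball 0 1 \<inter> (\<Inter>v\<in>sign_vecs. H (ctr a v))"

text \<open>The four faces around the vertex of P34 in direction sigma e_i.\<close>

definition vertex_faces :: "3 \<Rightarrow> real \<Rightarrow> (real^3) set" where
  "vertex_faces i \<sigma> = {v \<in> sign_vecs. v $ i = \<sigma>}"

definition adjacent_faces :: "real^3 \<Rightarrow> real^3 \<Rightarrow> bool" where
  "adjacent_faces v w \<longleftrightarrow> v \<in> sign_vecs \<and> w \<in> sign_vecs \<and> card {i. v $ i \<noteq> w $ i} = 1"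

definition oct_finite :: "real \<Rightarrow> bool" where
  "oct_finite a \<longleftrightarrow> (\<forall>i. \<forall>\<sigma>\<in>{1, -1}.
     \<exists>q. norm q < 1 \<and> (\<forall>v\<in>vertex_faces i \<sigma>. q \<in> S (ctr a v)))"

definition oct_ideal :: "real \<Rightarrow> bool" where
  "oct_ideal a \<longleftrightarrow> (\<forall>i. \<forall>\<sigma>\<in>{1, -1}.
     \<exists>q. norm q = 1 \<and> (\<forall>v\<in>vertex_faces i \<sigma>. q \<in> S (ctr a v)))"

definition oct_hyperideal :: "real \<Rightarrow> bool" where
  "oct_hyperideal a \<longleftrightarrow>
     (\<forall>v w. adjacent_faces v w \<longrightarrow> S (ctr a v) \<inter> S (ctr a w) \<noteq> {}) \<and>
     (\<forall>i. \<forall>\<sigma>\<in>{1, -1}.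
        \<not> (\<exists>q. norm q \<le> 1 \<and> (\<forall>v\<in>vertex_faces i \<sigma>. q \<in> S (ctr a v))))"

text \<open>Dihedral angle, at a point q of S(c1) \<inter> S(c2), of the region H(c1) \<inter> H(c2)
  (exterior of both balls): pi minus the angle between the normals q - c1, q - c2.\<close>

definition dihedral_at :: "real^3 \<Rightarrow> real^3 \<Rightarrow> real^3 \<Rightarrow> real" where
  "dihedral_at c1 c2 q =
     pi - arccos (((q - c1) \<bullet> (q - c2)) / (norm (q - c1) * norm (q - c2)))"

definition oct_angle :: "real \<Rightarrow> real" where
  "oct_angle a = (let c1 = ctr a (vector [1, 1, 1]); c2 = ctr a (vector [1, -1, 1])
     in dihedral_at c1 c2 (SOME q. q \<in> S c1 \<inter> S c2))"

end

theory Submission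
  imports Defs "HOL-Real_Asymp.Real_Asymp"
begin

text \<open>A sphere S(c) with |c| = a > 1 is the locus |q|^2 + 1 = 2 q \<bullet> c. Two such spheres whose
  centres are at distance d meet iff d^2 \<le> 4(a^2 - 1), touch only at the midpoint of their centres
  when equality holds, and at a common point the cosine of the dihedral angle is
  d^2 / (2(a^2 - 1)) - 1. Adjacent faces of P34(a) have d^2 = 4a^2/3, which yields the threshold
  a^2 = 3/2 and the cosine (3 - a^2) / (3(a^2 - 1)), decreasing to -1/3. The two opposite faces around
  a vertex have d^2 = 8a^2/3, so they are disjoint when a < sqrt 3. For a \<ge> sqrt 3 the four faces
  around the vertex in direction \<plusminus>e_i all pass through the axis point t(\<plusminus>e_i) with
  t^2 + 1 = 2ta/sqrt 3, whose smaller root is < 1 for a > sqrt 3 and is 1 for a = sqrt 3.\<close>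

lemma less_sqrt_iff: "0 \<le> a \<Longrightarrow> 0 \<le> x \<Longrightarrow> a < sqrt x \<longleftrightarrow> a\<^sup>2 < x"
  using real_sqrt_le_iff' by (meson not_le)

lemma sqrt_less_iff: "0 \<le> a \<Longrightarrow> sqrt x < a \<longleftrightarrow> x < a\<^sup>2"
  by (metis real_sqrt_abs abs_of_nonneg real_sqrt_less_iff)

lemma norm_axis_real: "norm (axis i (x :: real)) = \<bar>x\<bar>"
  by (simp add: norm_eq_sqrt_inner inner_axis_axis)

lemma mem_S_iff:
  assumes "1 \<le> norm c"
  shows "q \<in> S c \<longleftrightarrow> norm q ^ 2 + 1 = 2 * (q \<bullet> c)"
proof -
  have "q \<in> S c \<longleftrightarrow> norm (c - q) ^ 2 = norm c ^ 2 - 1"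
    using assms by (auto simp: S_def dist_norm real_sqrt_unique one_le_power)
  also have "norm (c - q) ^ 2 = norm q ^ 2 - 2 * (q \<bullet> c) + norm c ^ 2"
    by (simp add: power2_norm_eq_inner inner_diff_left inner_diff_right inner_commute)
  finally show ?thesis by auto
qed

lemma norm_diff_mem_S:
  assumes "q \<in> S c"
  shows "norm (q - c) = sqrt (norm c ^ 2 - 1)"
  using assms by (simp add: S_def dist_norm norm_minus_commute)

lemma inner_normals_mem_S:
  assumes "q \<in> S c1" "q \<in> S c2" "norm c1 = a" "norm c2 = a" "1 \<le> a"
  shows "(q - c1) \<bullet> (q - c2) = a\<^sup>2 - 1 - norm (c1 - c2) ^ 2 / 2"
proof -
  have "norm (q - c1) ^ 2 = a\<^sup>2 - 1" "norm (q - c2) ^ 2 = a\<^sup>2 - 1"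
    using assms norm_diff_mem_S by simp_all
  moreover have "(q - c1) - (q - c2) = - (c1 - c2)" by simp
  ultimately show ?thesis
    using dot_norm_neg[of "q - c1" "q - c2"] by (simp add: norm_minus_commute)
qed

definition cos_dihedral :: "real^3 \<Rightarrow> real^3 \<Rightarrow> real^3 \<Rightarrow> real" where
  "cos_dihedral c1 c2 q = - ((q - c1) \<bullet> (q - c2)) / (norm (q - c1) * norm (q - c2))"

lemma cos_dihedral_bounds: "- 1 \<le> cos_dihedral c1 c2 q" "cos_dihedral c1 c2 q \<le> 1"
  using Cauchy_Schwarz_ineq2[of "q - c1" "q - c2"]
  by (cases "norm (q - c1) * norm (q - c2) = 0",
      auto simp: cos_dihedral_def abs_le_iff divide_le_eq_1 le_divide_eq)

lemma dihedral_at_eq_arccos: "dihedral_at c1 c2 q = arccos (cos_dihedral c1 c2 q)"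
  using arccos_minus[of "- cos_dihedral c1 c2 q"] cos_dihedral_bounds[of c1 c2 q]
  by (simp add: dihedral_at_def cos_dihedral_def)

lemma cos_dihedral_at: "cos (dihedral_at c1 c2 q) = cos_dihedral c1 c2 q"
  by (simp add: dihedral_at_eq_arccos cos_dihedral_bounds)

lemma cos_dihedral_mem_S:
  assumes "q \<in> S c1" "q \<in> S c2" "norm c1 = a" "norm c2 = a" "1 < a"
  shows "cos_dihedral c1 c2 q = norm (c1 - c2) ^ 2 / (2 * (a\<^sup>2 - 1)) - 1"
proof -
  have norms: "norm (q - c1) * norm (q - c2) = a\<^sup>2 - 1"
    using assms norm_diff_mem_S by simp
  have "a\<^sup>2 - 1 > 0"
    using assms(5) by simp
  then show ?thesis
    unfolding cos_dihedral_def norms inner_normals_mem_S[OF assms(1-4) less_imp_le[OF assms(5)]]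
    by (simp add: field_simps)
qed

lemma S_Int_S_nonempty_iff:
  assumes "norm c1 = a" "norm c2 = a" "1 < a"
  shows "S c1 \<inter> S c2 \<noteq> {} \<longleftrightarrow> norm (c1 - c2) ^ 2 \<le> 4 * (a\<^sup>2 - 1)"
proof
  assume "S c1 \<inter> S c2 \<noteq> {}"
  then obtain q where q: "q \<in> S c1" "q \<in> S c2" by blast
  have "\<bar>(q - c1) \<bullet> (q - c2)\<bar> \<le> norm (q - c1) * norm (q - c2)"
    by (rule Cauchy_Schwarz_ineq2)
  also have "\<dots> = a\<^sup>2 - 1"
    using q assms norm_diff_mem_S by simp
  finally show "norm (c1 - c2) ^ 2 \<le> 4 * (a\<^sup>2 - 1)"
    using inner_normals_mem_S[OF q assms(1,2)] assms(3) by simp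
next
  assume d: "norm (c1 - c2) ^ 2 \<le> 4 * (a\<^sup>2 - 1)"
  define m where "m = midpoint c1 c2"
  define M where "M = m \<bullet> m"
  have cc: "c1 \<bullet> c1 = a\<^sup>2" "c2 \<bullet> c2 = a\<^sup>2"
    using assms(1,2) by (simp_all add: power2_norm_eq_inner[symmetric])
  have "norm (c1 - c2) ^ 2 = 2 * a\<^sup>2 - 2 * (c1 \<bullet> c2)"
    using cc by (simp add: power2_norm_eq_inner inner_diff_left inner_diff_right inner_commute)
  moreover have M: "M = (a\<^sup>2 + c1 \<bullet> c2) / 2" "m \<bullet> c1 = M" "m \<bullet> c2 = M"
    using cc by (simp_all add: M_def m_def midpoint_def inner_add_left inner_add_right inner_commute)
  ultimately have "1 \<le> M" using d by simp
  \<comment> \<open>as m \<bullet> c1 = m \<bullet> c2 = M, the point l m lies on both spheres iff M l^2 - 2 M l + 1 = 0\<close>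
  define l where "l = 1 + sqrt ((M - 1) / M)"
  have "M * (l - 1) ^ 2 = M - 1"
    using \<open>1 \<le> M\<close> by (simp add: l_def)
  then have l: "l\<^sup>2 * M + 1 = 2 * (l * M)"
    by (simp add: power2_eq_square algebra_simps)
  have "(l *\<^sub>R m) \<bullet> (l *\<^sub>R m) + 1 = 2 * ((l *\<^sub>R m) \<bullet> c)" if "c = c1 \<or> c = c2" for c
    using that l M by (auto simp: M_def power2_eq_square)
  then have "l *\<^sub>R m \<in> S c1 \<inter> S c2"
    using mem_S_iff assms by (auto simp: power2_norm_eq_inner)
  then show "S c1 \<inter> S c2 \<noteq> {}" by blast
qed

lemma S_Int_S_tangent:
  assumes "norm c1 = a" "norm c2 = a" "1 < a" "norm (c1 - c2) ^ 2 = 4 * (a\<^sup>2 - 1)"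
  shows "S c1 \<inter> S c2 = {midpoint c1 c2}"
proof -
  have "p = midpoint c1 c2" if p: "p \<in> S c1" "p \<in> S c2" for p
  proof -
    have "norm ((p - c1) + (p - c2)) ^ 2
        = norm (p - c1) ^ 2 + norm (p - c2) ^ 2 + 2 * ((p - c1) \<bullet> (p - c2))"
      by (simp only: power2_norm_eq_inner inner_add_left inner_add_right inner_commute)
    also have "\<dots> = 0"
      using p assms norm_diff_mem_S inner_normals_mem_S[OF p assms(1,2)] by (simp add: field_simps)
    finally have "(p - c1) + (p - c2) = 0" by simp
    then show ?thesis
      by (metis midpoint_eq_iff add_diff_add eq_iff_diff_eq_0)
  qed
  moreover have "S c1 \<inter> S c2 \<noteq> {}"
    using S_Int_S_nonempty_iff assms by simp
  ultimately show ?thesis by blast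
qed

lemma sign_vecsD: "v \<in> sign_vecs \<Longrightarrow> v $ i = 1 \<or> v $ i = -1"
  by (simp add: sign_vecs_def)

lemma norm_sign_vec:
  assumes "v \<in> sign_vecs"
  shows "norm v = sqrt 3"
proof -
  have "v $ i * v $ i = 1" for i
    using sign_vecsD[OF assms, of i] by auto
  then show ?thesis
    by (simp add: norm_eq_sqrt_inner inner_vec_def sum_3)
qed

lemma norm_ctr: "0 \<le> a \<Longrightarrow> v \<in> sign_vecs \<Longrightarrow> norm (ctr a v) = a"
  by (simp add: ctr_def norm_sign_vec)

lemma norm_ctr_diff: "norm (ctr a v - ctr a w) ^ 2 = a\<^sup>2 / 3 * norm (v - w) ^ 2"
  by (simp add: ctr_def scaleR_diff_right[symmetric] power_mult_distrib power_divide)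

lemma norm_diff_sign_vecs:
  assumes "v \<in> sign_vecs" "w \<in> sign_vecs"
  shows "norm (v - w) ^ 2 = 4 * real (card {i. v $ i \<noteq> w $ i})"
proof -
  have "(v - w) $ i * (v - w) $ i = 4 * of_bool (v $ i \<noteq> w $ i)" for i
    using sign_vecsD[OF assms(1), of i] sign_vecsD[OF assms(2), of i] by auto
  then show ?thesis
    by (simp add: power2_norm_eq_inner inner_vec_def sum_distrib_left[symmetric])
qed

lemma adjacent_faces_ctr:
  assumes "0 \<le> a" "adjacent_faces v w"
  shows "norm (ctr a v) = a" "norm (ctr a w) = a" "norm (ctr a v - ctr a w) ^ 2 = 4 * a\<^sup>2 / 3"
  using assms norm_ctr norm_ctr_diff norm_diff_sign_vecs by (auto simp: adjacent_faces_def)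

lemma adjacent_faces_111: "adjacent_faces (vector [1, 1, 1]) (vector [1, -1, 1])"
proof -
  have "{i. (vector [1, 1, 1] :: real^3) $ i \<noteq> vector [1, -1, 1] $ i} = {2}"
  proof (intro set_eqI iffI)
    fix i :: 3
    assume "i \<in> {i. (vector [1, 1, 1] :: real^3) $ i \<noteq> vector [1, -1, 1] $ i}"
    then show "i \<in> {2}"
      using exhaust_3[of i] by auto
  qed simp
  then show ?thesis
    by (simp add: adjacent_faces_def sign_vecs_def forall_3)
qed

lemma adjacent_faces_meet_iff:
  assumes "1 < a" "adjacent_faces v w"
  shows "S (ctr a v) \<inter> S (ctr a w) \<noteq> {} \<longleftrightarrow> 3 / 2 \<le> a\<^sup>2"
proof -
  note ctr = adjacent_faces_ctr[of a, OF _ assms(2)]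
  have "S (ctr a v) \<inter> S (ctr a w) \<noteq> {} \<longleftrightarrow> 4 * a\<^sup>2 / 3 \<le> 4 * (a\<^sup>2 - 1)"
    using S_Int_S_nonempty_iff[OF ctr(1,2)] ctr(3) assms(1) by simp
  then show ?thesis by (simp add: mult.commute)
qed

lemma adjacent_faces_tangent:
  assumes "a\<^sup>2 = 3 / 2" "1 < a" "adjacent_faces v w"
  shows "S (ctr a v) \<inter> S (ctr a w) = {midpoint (ctr a v) (ctr a w)}"
proof -
  note ctr = adjacent_faces_ctr[of a, OF _ assms(3)]
  show ?thesis
    using assms by (intro S_Int_S_tangent[OF ctr(1,2)]) (auto simp: ctr(3))
qed

lemma cos_dihedral_adjacent_faces:
  assumes "1 < a" "adjacent_faces v w" "q \<in> S (ctr a v)" "q \<in> S (ctr a w)"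
  shows "cos_dihedral (ctr a v) (ctr a w) q = (3 - a\<^sup>2) / (3 * (a\<^sup>2 - 1))"
proof -
  have "a\<^sup>2 - 1 > 0"
    using assms(1) by simp
  then have "(4 * a\<^sup>2 / 3) / (2 * (a\<^sup>2 - 1)) - 1 = (3 - a\<^sup>2) / (3 * (a\<^sup>2 - 1))"
    by (simp add: field_simps)
  with cos_dihedral_mem_S[OF assms(3,4)] adjacent_faces_ctr[OF _ assms(2), of a] assms(1)
  show ?thesis by simp
qed

lemma oct_angle_eq:
  assumes "1 < a" "3 / 2 \<le> a\<^sup>2"
  shows "oct_angle a = arccos ((3 - a\<^sup>2) / (3 * (a\<^sup>2 - 1)))"
proof -
  let ?c1 = "ctr a (vector [1, 1, 1])" and ?c2 = "ctr a (vector [1, -1, 1])"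
  have "\<exists>q. q \<in> S ?c1 \<inter> S ?c2"
    using adjacent_faces_meet_iff[OF assms(1) adjacent_faces_111] assms(2) by blast
  then have "(SOME q. q \<in> S ?c1 \<inter> S ?c2) \<in> S ?c1 \<inter> S ?c2"
    by (rule someI_ex)
  then have "cos_dihedral ?c1 ?c2 (SOME q. q \<in> S ?c1 \<inter> S ?c2) = (3 - a\<^sup>2) / (3 * (a\<^sup>2 - 1))"
    using cos_dihedral_adjacent_faces[OF assms(1) adjacent_faces_111] by blast
  then show ?thesis
    by (simp add: oct_angle_def dihedral_at_eq_arccos)
qed

lemma strict_mono_on_oct_angle: "strict_mono_on {sqrt (3 / 2)..} oct_angle"
proof (rule strict_mono_onI)
  fix x y :: real
  assume "x \<in> {sqrt (3 / 2)..}" "y \<in> {sqrt (3 / 2)..}" "x < y"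
  then have xy: "sqrt (3 / 2) \<le> x" "sqrt (3 / 2) \<le> y" by simp_all
  then have x: "3 / 2 \<le> x\<^sup>2" and y: "3 / 2 \<le> y\<^sup>2"
    by (auto dest: sqrt_le_D)
  have "1 < sqrt (3 / 2)" by simp
  with xy have "1 < x" "1 < y" by linarith+
  have "x\<^sup>2 < y\<^sup>2"
    using \<open>x < y\<close> \<open>1 < x\<close> by (intro power_strict_mono) auto
  then have "2 / (3 * (y\<^sup>2 - 1)) < 2 / (3 * (x\<^sup>2 - 1))"
    using x by (intro divide_strict_left_mono) (auto intro!: mult_pos_pos)
  moreover have "(3 - b\<^sup>2) / (3 * (b\<^sup>2 - 1)) = 2 / (3 * (b\<^sup>2 - 1)) - 1 / 3" if "1 < b\<^sup>2" for b :: real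
    using that by (simp add: field_simps)
  ultimately have "arccos ((3 - y\<^sup>2) / (3 * (y\<^sup>2 - 1))) > arccos ((3 - x\<^sup>2) / (3 * (x\<^sup>2 - 1)))"
    using x y by (intro arccos_less_arccos) (auto simp: field_simps)
  then show "oct_angle x < oct_angle y"
    using oct_angle_eq x y \<open>1 < x\<close> \<open>1 < y\<close> by simp
qed

lemma oct_angle_tendsto: "(oct_angle \<longlongrightarrow> arccos (- 1 / 3)) at_top"
proof -
  have "((\<lambda>a::real. (3 - a\<^sup>2) / (3 * (a\<^sup>2 - 1))) \<longlongrightarrow> - 1 / 3) at_top"
    by real_asymp
  moreover have "isCont arccos (- 1 / 3)"
    by (rule isCont_arccos) auto
  ultimately have "((\<lambda>a. arccos ((3 - a\<^sup>2) / (3 * (a\<^sup>2 - 1)))) \<longlongrightarrow> arccos (- 1 / 3)) at_top"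
    using isCont_tendsto_compose by blast
  moreover have "\<forall>\<^sub>F a in at_top. arccos ((3 - a\<^sup>2) / (3 * (a\<^sup>2 - 1))) = oct_angle a"
  proof (rule eventually_mono[OF eventually_gt_at_top[of 2]])
    fix a :: real
    assume "2 < a"
    then have "1 < a" "3 / 2 \<le> a\<^sup>2"
      using power_strict_mono[of 2 a 2] by auto
    then show "arccos ((3 - a\<^sup>2) / (3 * (a\<^sup>2 - 1))) = oct_angle a"
      by (simp add: oct_angle_eq)
  qed
  ultimately show ?thesis
    by (rule Lim_transform_eventually)
qed

lemma axis_mem_S_ctr:
  assumes "1 < a" "\<sigma> \<in> {1, -1}" "v \<in> vertex_faces i \<sigma>" "t\<^sup>2 + 1 = 2 * (a / sqrt 3) * t"
  shows "axis i (\<sigma> * t) \<in> S (ctr a v)"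
proof -
  have v: "v \<in> sign_vecs" "v $ i = \<sigma>"
    using assms(3) by (auto simp: vertex_faces_def)
  have "norm (axis i (\<sigma> * t)) ^ 2 = t\<^sup>2" "axis i (\<sigma> * t) \<bullet> ctr a v = a / sqrt 3 * t"
    using assms(2) v(2) by (auto simp: norm_axis_real inner_axis' ctr_def)
  then show ?thesis
    using mem_S_iff norm_ctr v(1) assms(1,4) by simp
qed

lemma vertex_parameter:
  fixes u :: real
  assumes "1 < u"
  obtains t where "0 < t" "t < 1" "t\<^sup>2 + 1 = 2 * u * t"
proof
  let ?s = "sqrt (u\<^sup>2 - 1)"
  have "?s\<^sup>2 = u\<^sup>2 - 1"
    using assms by simp
  then show "(u - ?s)\<^sup>2 + 1 = 2 * u * (u - ?s)"
    unfolding power2_diff by (simp add: power2_eq_square algebra_simps)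
  show "0 < u - ?s"
    using real_less_lsqrt[of u "u\<^sup>2 - 1"] assms by simp
  show "u - ?s < 1"
    using real_less_rsqrt[of "u - 1" "u\<^sup>2 - 1"] assms by (simp add: power2_diff)
qed

lemma oct_finite_if_sqrt3_less:
  assumes "sqrt 3 < a"
  shows "oct_finite a"
proof -
  have "1 < sqrt 3" by simp
  with assms have "1 < a" by linarith
  from assms have "1 < a / sqrt 3"
    by (simp add: less_divide_eq)
  then obtain t where t: "0 < t" "t < 1" "t\<^sup>2 + 1 = 2 * (a / sqrt 3) * t"
    using vertex_parameter by metis
  show ?thesis
    unfolding oct_finite_def
  proof (intro allI ballI exI conjI)
    fix i :: 3 and \<sigma> :: real and v
    assume "\<sigma> \<in> {1, -1 :: real}"
    then show "norm (axis i (\<sigma> * t)) < 1"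
      using t by (auto simp: norm_axis_real)
    show "axis i (\<sigma> * t) \<in> S (ctr a v)" if "v \<in> vertex_faces i \<sigma>"
      using axis_mem_S_ctr[OF \<open>1 < a\<close> \<open>\<sigma> \<in> {1, -1}\<close> that t(3)] .
  qed
qed

lemma oct_ideal_sqrt3: "oct_ideal (sqrt 3)"
  unfolding oct_ideal_def
proof (intro allI ballI exI conjI)
  fix i :: 3 and \<sigma> :: real and v
  assume "\<sigma> \<in> {1, -1 :: real}"
  then show "norm (axis i (\<sigma> * 1)) = 1"
    by (auto simp: norm_axis_real)
  show "axis i (\<sigma> * 1) \<in> S (ctr (sqrt 3) v)" if "v \<in> vertex_faces i \<sigma>"
    by (rule axis_mem_S_ctr[OF _ \<open>\<sigma> \<in> {1, -1}\<close> that]) simp_all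
qed

lemma vertex_faces_opposite:
  assumes "\<sigma> \<in> {1, -1}"
  obtains v w where "v \<in> vertex_faces i \<sigma>" "w \<in> vertex_faces i \<sigma>" "norm (v - w) ^ 2 = 8"
proof
  let ?v = "\<chi> j. if j = i then \<sigma> else 1" and ?w = "\<chi> j. if j = i then \<sigma> else -1"
  show v: "?v \<in> vertex_faces i \<sigma>" and w: "?w \<in> vertex_faces i \<sigma>"
    using assms by (auto simp: vertex_faces_def sign_vecs_def)
  have "{j. ?v $ j \<noteq> ?w $ j} = UNIV - {i}"
    by auto
  then show "norm (?v - ?w) ^ 2 = 8"
    using norm_diff_sign_vecs v w by (simp add: vertex_faces_def card_Diff_singleton)
qed

lemma vertex_faces_no_common_point:
  assumes "1 < a" "a < sqrt 3" "\<sigma> \<in> {1, -1}"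
  shows "\<not> (\<exists>q. \<forall>v\<in>vertex_faces i \<sigma>. q \<in> S (ctr a v))"
proof -
  obtain v w where vw: "v \<in> vertex_faces i \<sigma>" "w \<in> vertex_faces i \<sigma>" "norm (v - w) ^ 2 = 8"
    using vertex_faces_opposite[OF assms(3)] by metis
  have "a\<^sup>2 < 3"
    using assms less_sqrt_iff by simp
  then have "\<not> norm (ctr a v - ctr a w) ^ 2 \<le> 4 * (a\<^sup>2 - 1)"
    by (simp add: norm_ctr_diff vw(3))
  moreover have "norm (ctr a v) = a" "norm (ctr a w) = a"
    using vw(1,2) assms(1) norm_ctr by (auto simp: vertex_faces_def)
  ultimately have "S (ctr a v) \<inter> S (ctr a w) = {}"
    using S_Int_S_nonempty_iff assms(1) by blast
  with vw show ?thesis by blast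
qed

lemma oct_hyperideal_if_between:
  assumes "sqrt (3 / 2) < a" "a < sqrt 3"
  shows "oct_hyperideal a"
proof -
  have "1 < sqrt (3 / 2)" by simp
  with assms(1) have "1 < a" by linarith
  moreover from this assms(1) have "3 / 2 < a\<^sup>2"
    using sqrt_less_iff by simp
  ultimately show ?thesis
    unfolding oct_hyperideal_def
    using adjacent_faces_meet_iff vertex_faces_no_common_point[OF _ assms(2)] by auto
qed

lemma vector_mem_vertex_faces:
  "s1 \<in> {1, -1} \<Longrightarrow> s2 \<in> {1, -1} \<Longrightarrow> vector [s1, s2, 1] \<in> vertex_faces 3 1"
  by (auto simp: vertex_faces_def sign_vecs_def forall_3)

theorem mainTheorem18:
  fixes a :: real
  assumes "a > 1"
  shows
   "(a > sqrt 3 \<longrightarrow>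
       (\<exists>p. norm p < 1 \<and> (\<forall>s1\<in>{1, -1}. \<forall>s2\<in>{1, -1}.
          p \<in> S (ctr a (vector [s1, s2, 1])))) \<and> oct_finite a)
  \<and> (a = sqrt 3 \<longrightarrow> oct_ideal a \<and>
       (\<forall>v w. adjacent_faces v w \<longrightarrow>
          (\<forall>q\<in>S (ctr a v) \<inter> S (ctr a w). dihedral_at (ctr a v) (ctr a w) q = pi / 2)))
  \<and> strict_mono_on {sqrt 3..} oct_angle
  \<and> (oct_angle \<longlongrightarrow> arccos (-1/3)) at_top
  \<and> (a = sqrt (3/2) \<longrightarrow>
       (\<exists>q. S (ctr a (vector [1, 1, 1])) \<inter> S (ctr a (vector [1, -1, 1])) = {q}))
  \<and> (a < sqrt (3/2) \<longrightarrow>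
       S (ctr a (vector [1, 1, 1])) \<inter> S (ctr a (vector [1, -1, 1])) = {})
  \<and> (a > sqrt (3/2) \<longrightarrow>
       S (ctr a (vector [1, 1, 1])) \<inter> S (ctr a (vector [1, -1, 1])) \<noteq> {} \<and>
       (\<forall>q\<in>S (ctr a (vector [1, 1, 1])) \<inter> S (ctr a (vector [1, -1, 1])).
          cos (dihedral_at (ctr a (vector [1, 1, 1])) (ctr a (vector [1, -1, 1])) q)
            = (3 - a^2) / (3 * (a^2 - 1))))
  \<and> (sqrt (3/2) < a \<and> a < sqrt 3 \<longrightarrow> oct_hyperideal a)"
proof -
  let ?c1 = "ctr a (vector [1, 1, 1])" and ?c2 = "ctr a (vector [1, -1, 1])"
  have finite: "\<exists>p. norm p < 1 \<and> (\<forall>s1\<in>{1, -1}. \<forall>s2\<in>{1, -1}. p \<in> S (ctr a (vector [s1, s2, 1])))"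
    if "oct_finite a"
    using that vector_mem_vertex_faces unfolding oct_finite_def by (metis insertI1)
  have right_angle: "dihedral_at (ctr a v) (ctr a w) q = pi / 2"
    if "a = sqrt 3" "adjacent_faces v w" "q \<in> S (ctr a v) \<inter> S (ctr a w)" for v w q
    using that cos_dihedral_adjacent_faces[of a v w q] by (simp add: dihedral_at_eq_arccos)
  have tangent: "\<exists>q. S ?c1 \<inter> S ?c2 = {q}" if "a = sqrt (3 / 2)"
    using adjacent_faces_tangent[OF _ assms adjacent_faces_111] that by simp
  have disjoint: "S ?c1 \<inter> S ?c2 = {}" if "a < sqrt (3 / 2)"
    using adjacent_faces_meet_iff[OF assms adjacent_faces_111] that assms less_sqrt_iff by simp
  have meet: "S ?c1 \<inter> S ?c2 \<noteq> {}" if "sqrt (3 / 2) < a"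
    using adjacent_faces_meet_iff[OF assms adjacent_faces_111] that assms sqrt_less_iff by simp
  show ?thesis
    using finite oct_finite_if_sqrt3_less oct_ideal_sqrt3 right_angle
      monotone_on_subset[OF strict_mono_on_oct_angle] oct_angle_tendsto tangent disjoint meet
      cos_dihedral_at cos_dihedral_adjacent_faces[OF assms adjacent_faces_111] oct_hyperideal_if_between
    by auto
qed

end
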